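(* There exist numerical constants $c_0,c_1>0$ such that the following holds. Let $s\in\mathbb{N}$, let $m\ge c_0s^2\log(2s)$ be an integer and $n=9m$. Then for any $w_1,\dots,w_s$ in the closed unit disk $\mathbb{D}=\{w\in\mathbb{C}:|w|\le1\}$, the subspace $X(w_1,\dots,w_s)$ admits a reproducing filter $\varphi^X_+\in\mathbb{C}^+_{2n}(\mathbb{Z})$ such that $$\|\mathcal{F}^+_{2n}[\varphi^X_+]\|_p\le\frac{\mathsf{c}_\star\big(c_1s^2\log(en)\big)^{1/p}}{\sqrt{2n+1}}\quad\text{for all }p\in[1,+\infty],\qquad \mathsf{c}_\star=2.16\pi^2+6.$$
   Context: $\mathbb{C}(\mathbb{Z})$: two-sided complex sequences; $\mathbb{C}^+_N(\mathbb{Z})$: sequences with $x_t=0$ for $t\notin\{0,\dots,N\}$. $(\Delta x)_t=x_{t-1}$, so $(\Delta^{-n}u)_t=u_{t+n}$. $X(w_1,\dots,w_s)=\{x:\mathsf{f}(\Delta)x=0\}$ with $\mathsf{f}(z)=\prod_k(1-w_kz)$. Convolution $(u*v)_t=\sum_\tau u_\tau v_{t-\tau}$; $\varphi$ is reproducing for $X$ if $\varphi*x=x$ for all $x\in X$. DFT $(\mathcal{F}_n[u])_k=(2n+1)^{-1/2}\sum_{|\tau|\le n}\exp(-i2\pi k\tau/(2n+1))u_\tau$, $k=0,\dots,2n$, and the one-sided DFT is $\mathcal{F}^+_{2n}[u]:=\mathcal{F}_n[\Delta^{-n}u]$. *)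

theory Defs
  imports "HOL-Analysis.Analysis"
begin

type_synonym cseq = "int \<Rightarrow> complex"

definition Delta :: "cseq \<Rightarrow> cseq" where
  "Delta x = (\<lambda>t. x (t - 1))"

definition factor_op :: "complex \<Rightarrow> cseq \<Rightarrow> cseq" where
  "factor_op w x = (\<lambda>t. x t - w * Delta x t)"

text \<open>f(Delta) with f(z) = prod_k (1 - w_k z); factors commute.\<close>
definition f_op :: "complex list \<Rightarrow> cseq \<Rightarrow> cseq" where
  "f_op ws x = foldr factor_op ws x"

definition Xsp :: "complex list \<Rightarrow> cseq set" where
  "Xsp ws = {x. f_op ws x = (\<lambda>_. 0)}"

definition Cplus :: "nat \<Rightarrow> cseq set" where
  "Cplus N = {x. \<forall>t. t \<notin> {0..int N} \<longrightarrow> x t = 0}"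

definition conv :: "cseq \<Rightarrow> cseq \<Rightarrow> cseq" where
  "conv u v = (\<lambda>t. infsum (\<lambda>\<tau>. u \<tau> * v (t - \<tau>)) UNIV)"

definition reproducing :: "cseq \<Rightarrow> cseq set \<Rightarrow> bool" where
  "reproducing \<phi> X \<longleftrightarrow> (\<forall>x\<in>X. conv \<phi> x = x)"

text \<open>DFT F_n, components k = 0..2n.\<close>
definition dft :: "nat \<Rightarrow> cseq \<Rightarrow> nat \<Rightarrow> complex" where
  "dft n u k = (1 / sqrt (real (2*n+1))) *
     (\<Sum>\<tau>\<in>{- int n..int n}. exp (- (\<i> * complex_of_real (2 * pi * real k * real_of_int \<tau> / real (2*n+1)))) * u \<tau>)"

text \<open>One-sided DFT: dft_plus n u = F^+_{2n}[u] = F_n[Delta^{-n} u].\<close>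
definition dft_plus :: "nat \<Rightarrow> cseq \<Rightarrow> nat \<Rightarrow> complex" where
  "dft_plus n u = dft n (\<lambda>t. u (t + int n))"

definition lp_norm :: "nat \<Rightarrow> real \<Rightarrow> (nat \<Rightarrow> complex) \<Rightarrow> real" where
  "lp_norm n p v = (\<Sum>k\<le>2*n. cmod (v k) powr p) powr (1 / p)"

definition linf_norm :: "nat \<Rightarrow> (nat \<Rightarrow> complex) \<Rightarrow> real" where
  "linf_norm n v = Max ((\<lambda>k. cmod (v k)) ` {..2*n})"

definition c_star :: real where
  "c_star = 2.16 * pi^2 + 6"

end

theory Submission
  imports Defs "HOL-Computational_Algebra.Polynomial"
begin

text \<open>
  The filter is the coefficient sequence of \<open>\<Phi>(z) = 1 - \<Prod>\<^sub>k B(w\<^sub>k z)\<close>, where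
  \<open>L = n div s\<close>, \<open>r = 1 - 4/(L+1)\<close>, \<open>E(x) = (1 + x + \<dots> + x\<^sup>L)/(L+1)\<close>,
  \<open>(1 - x) H(x) = 1 - E(x)\<close> and \<open>B(u) = r (1 - u) H(r u) (1 + E(r u))\<close>.
  Each factor \<open>B(w z)\<close> is divisible by \<open>1 - w z\<close>, so \<open>1 - \<Phi>(\<Delta>)\<close> annihilates
  \<open>X(w\<^sub>1, \<dots>, w\<^sub>s)\<close> and convolution with the filter reproduces \<open>X\<close>.

  From \<open>(1 - r u) B(u) = r (1 - u) (1 - E(r u)\<^sup>2)\<close> and \<open>\<bar>E(r u)\<bar> \<bar>1 - r u\<bar> \<le> 2/(L+1)\<close> one gets
  \<open>\<bar>B\<bar> \<le> 1\<close> and \<open>\<bar>1 - B(u)\<bar> \<le> (5/4) (4/(L+1)) / \<bar>1 - r u\<bar>\<close> on the unit disk. On the DFT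
  grid, \<open>\<bar>1 - r w \<zeta>\<^sup>k\<bar>\<close> is bounded below by the distance of the \<open>k\<close>-th grid angle to
  \<open>arg w\<close>, so summing over the grid gives a harmonic sum, \<open>O(n log n / L)\<close> per factor.
  With \<open>\<bar>1 - \<Prod> b\<^sub>k\<bar> \<le> \<Sum> \<bar>1 - b\<^sub>k\<bar>\<close> this is an \<open>\<ell>\<^sub>1\<close> bound \<open>O(s\<^sup>2 log n)\<close> for the DFT of
  \<open>\<Phi>\<close>; interpolation with the \<open>\<ell>\<^sub>\<infinity>\<close> bound \<open>\<bar>\<Phi>\<bar> \<le> 2\<close> gives every \<open>\<ell>\<^sub>p\<close> bound.
\<close>

section \<open>Polynomials in the backward shift\<close>

definition poly_Delta :: "complex poly \<Rightarrow> cseq \<Rightarrow> cseq" where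
  "poly_Delta p x = (\<lambda>t. \<Sum>i\<le>degree p. coeff p i * x (t - int i))"

lemma poly_Delta_eq_sum:
  assumes "degree p \<le> K"
  shows "poly_Delta p x t = (\<Sum>i\<le>K. coeff p i * x (t - int i))"
  unfolding poly_Delta_def
  by (rule sum.mono_neutral_left) (use assms in \<open>auto simp: coeff_eq_0\<close>)

lemma poly_Delta_add: "poly_Delta (p + q) x t = poly_Delta p x t + poly_Delta q x t"
  using degree_add_le_max[of p q]
  by (simp add: poly_Delta_eq_sum[of _ "max (degree p) (degree q)"] sum.distrib algebra_simps)

lemma poly_Delta_diff: "poly_Delta (p - q) x t = poly_Delta p x t - poly_Delta q x t"
  using degree_diff_le_max[of p q]
  by (simp add: poly_Delta_eq_sum[of _ "max (degree p) (degree q)"] sum_subtractf algebra_simps)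

lemma poly_Delta_smult: "poly_Delta (smult a p) x t = a * poly_Delta p x t"
  by (simp add: poly_Delta_eq_sum[of _ "degree p"] degree_smult_le sum_distrib_left mult.assoc)

lemma poly_Delta_pCons: "poly_Delta (pCons a p) x t = a * x t + poly_Delta p x (t - 1)"
proof -
  have "poly_Delta (pCons a p) x t = (\<Sum>i\<le>Suc (degree p). coeff (pCons a p) i * x (t - int i))"
    by (rule poly_Delta_eq_sum) (simp add: degree_pCons_le)
  also have "\<dots> = a * x t + poly_Delta p x (t - 1)"
    by (subst sum.atMost_Suc_shift) (simp add: poly_Delta_def algebra_simps)
  finally show ?thesis .
qed

lemma poly_Delta_zero [simp]: "poly_Delta 0 x = (\<lambda>_. 0)"
  by (simp add: poly_Delta_def)

lemma poly_Delta_one [simp]: "poly_Delta 1 x = x"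
  by (simp add: poly_Delta_def)

lemma poly_Delta_zero_seq [simp]: "poly_Delta p (\<lambda>_. 0) = (\<lambda>_. 0)"
  by (simp add: poly_Delta_def)

lemma poly_Delta_mult: "poly_Delta (p * q) x = poly_Delta p (poly_Delta q x)"
proof (induction p)
  case 0
  then show ?case by simp
next
  case (pCons a p)
  show ?case
  proof
    fix t
    have "poly_Delta (pCons a p * q) x t = poly_Delta (smult a q + pCons 0 (p * q)) x t"
      by simp
    also have "\<dots> = poly_Delta (pCons a p) (poly_Delta q x) t"
      by (simp only: poly_Delta_add poly_Delta_smult poly_Delta_pCons pCons.IH) simp
    finally show "poly_Delta (pCons a p * q) x t = poly_Delta (pCons a p) (poly_Delta q x) t" .
  qed
qed

lemma f_op_eq_poly_Delta: "f_op ws x = poly_Delta (\<Prod>w\<leftarrow>ws. [:1, -w:]) x"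
proof (induction ws)
  case Nil
  then show ?case by (simp add: f_op_def)
next
  case (Cons w ws)
  have "factor_op w y = poly_Delta [:1, -w:] y" for y
    by (simp add: fun_eq_iff poly_Delta_pCons factor_op_def Delta_def)
  with Cons.IH show ?case
    by (simp only: f_op_def foldr.simps o_apply list.map prod_list.Cons poly_Delta_mult)
qed

definition coeff_seq :: "complex poly \<Rightarrow> cseq" where
  "coeff_seq P = (\<lambda>t. if 0 \<le> t then coeff P (nat t) else 0)"

lemma coeff_seq_in_Cplus: "degree P \<le> N \<Longrightarrow> coeff_seq P \<in> Cplus N"
  by (auto simp: Cplus_def coeff_seq_def coeff_eq_0)

lemma conv_coeff_seq: "conv (coeff_seq P) x = poly_Delta P x"
proof
  fix t
  let ?S = "int ` {..degree P}"
  have "coeff_seq P \<tau> = 0" if "\<tau> \<notin> ?S" for \<tau>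
    using that unfolding coeff_seq_def by (metis atMost_iff coeff_eq_0 image_eqI int_nat_eq not_le)
  then have "conv (coeff_seq P) x t = infsum (\<lambda>\<tau>. coeff_seq P \<tau> * x (t - \<tau>)) ?S"
    unfolding conv_def by (intro infsum_cong_neutral) auto
  also have "\<dots> = (\<Sum>i\<le>degree P. coeff_seq P (int i) * x (t - int i))"
    by (simp add: sum.reindex)
  finally show "conv (coeff_seq P) x t = poly_Delta P x t"
    by (simp add: poly_Delta_def coeff_seq_def)
qed

lemma reproducing_coeff_seq:
  assumes "(\<Prod>w\<leftarrow>ws. [:1, -w:]) dvd 1 - P"
  shows "reproducing (coeff_seq P) (Xsp ws)"
  unfolding reproducing_def
proof
  fix x assume "x \<in> Xsp ws"
  then have annihilated: "poly_Delta (\<Prod>w\<leftarrow>ws. [:1, -w:]) x = (\<lambda>_. 0)"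
    by (simp add: Xsp_def f_op_eq_poly_Delta)
  from assms obtain R where "1 - P = (\<Prod>w\<leftarrow>ws. [:1, -w:]) * R"
    by (rule dvdE)
  then have "P = 1 - R * (\<Prod>w\<leftarrow>ws. [:1, -w:])"
    by (simp add: algebra_simps)
  then have "poly_Delta P x = x"
    by (simp add: fun_eq_iff poly_Delta_diff poly_Delta_mult annihilated)
  then show "conv (coeff_seq P) x = x"
    by (simp add: conv_coeff_seq)
qed

lemma dft_plus_coeff_seq:
  assumes "degree P \<le> 2 * n"
  shows "dft_plus n (coeff_seq P) k =
    cis (2 * pi * real k * real n / real (2 * n + 1)) *
    poly P (cis (- (2 * pi * real k / real (2 * n + 1)))) / sqrt (real (2 * n + 1))"
proof -
  define N where "N = real (2 * n + 1)"
  define z where "z = cis (- (2 * pi * real k / N))"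
  have "N > 0" by (simp add: N_def)
  have exp_cis: "exp (- (\<i> * complex_of_real x)) = cis (- x)" for x
    by (simp add: cis_conv_exp)
  define F where "F \<tau> = exp (- (\<i> * complex_of_real (2 * pi * real k * real_of_int \<tau> / N))) *
      coeff_seq P (\<tau> + int n)" for \<tau>
  have F_eq: "F (int j - int n) = cis (2 * pi * real k * real n / N) * (coeff P j * z ^ j)" for j
  proof -
    have "- (2 * pi * real k * real_of_int (int j - int n) / N) =
        2 * pi * real k * real n / N + real j * (- (2 * pi * real k / N))"
      using \<open>N > 0\<close> by (simp add: field_simps)
    then have "exp (- (\<i> * complex_of_real (2 * pi * real k * real_of_int (int j - int n) / N))) =
        cis (2 * pi * real k * real n / N) * z ^ j"
      by (simp only: exp_cis z_def Complex.DeMoivre cis_mult)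
    then show ?thesis
      unfolding F_def by (simp only:) (simp add: coeff_seq_def)
  qed
  have "(\<Sum>\<tau>\<in>{- int n..int n}. F \<tau>) = (\<Sum>j\<le>2 * n. F (int j - int n))"
    by (rule sum.reindex_bij_witness[of _ "\<lambda>j. int j - int n" "\<lambda>\<tau>. nat (\<tau> + int n)"]) auto
  also have "\<dots> = (\<Sum>j\<le>2 * n. cis (2 * pi * real k * real n / N) * (coeff P j * z ^ j))"
    by (intro sum.cong refl F_eq)
  also have "\<dots> = cis (2 * pi * real k * real n / N) * poly P z"
    by (simp add: sum_distrib_left[symmetric] poly_altdef
        sum.mono_neutral_right[of "{..2 * n}" "{..degree P}"] assms coeff_eq_0)
  finally show ?thesis
    by (simp add: dft_plus_def dft_def F_def N_def z_def)
qed

lemma norm_dft_plus_coeff_seq: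
  assumes "degree P \<le> 2 * n"
  shows "cmod (dft_plus n (coeff_seq P) k) =
    cmod (poly P (cis (- (2 * pi * real k / real (2 * n + 1))))) / sqrt (real (2 * n + 1))"
  by (simp add: dft_plus_coeff_seq[OF assms] norm_mult norm_divide)

section \<open>The filter polynomial\<close>

text \<open>\<open>mean_power_poly\<close>, \<open>mean_power_quot\<close>, \<open>factor_poly\<close> and
  \<open>filter_poly\<close> are \<open>E\<close>, \<open>H\<close>, \<open>B\<close> and \<open>\<Phi>\<close> above; \<open>pcompose p [:0, a:]\<close> is \<open>p(a z)\<close>.\<close>

definition mean_power_poly :: "nat \<Rightarrow> complex poly" where
  "mean_power_poly L = smult (1 / of_nat (L + 1)) (\<Sum>j\<le>L. monom 1 j)"

definition mean_power_quot :: "nat \<Rightarrow> complex poly" where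
  "mean_power_quot L = smult (1 / of_nat (L + 1)) (\<Sum>j\<le>L. \<Sum>i<j. monom 1 i)"

definition factor_poly :: "nat \<Rightarrow> real \<Rightarrow> complex poly" where
  "factor_poly L r = smult (of_real r) ([:1, -1:] * pcompose (mean_power_quot L) [:0, of_real r:] *
     (1 + pcompose (mean_power_poly L) [:0, of_real r:]))"

definition filter_poly :: "nat \<Rightarrow> real \<Rightarrow> complex list \<Rightarrow> complex poly" where
  "filter_poly L r ws = 1 - (\<Prod>w\<leftarrow>ws. pcompose (factor_poly L r) [:0, w:])"

lemma poly_mean_power_poly: "poly (mean_power_poly L) x = (\<Sum>j\<le>L. x ^ j) / of_nat (L + 1)"
  by (simp add: mean_power_poly_def poly_sum poly_monom sum_divide_distrib)

lemma poly_mean_power_quot: "poly (mean_power_quot L) x = (\<Sum>j\<le>L. \<Sum>i<j. x ^ i) / of_nat (L + 1)"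
  by (simp add: mean_power_quot_def poly_sum poly_monom sum_divide_distrib)

lemma poly_factor_poly:
  "poly (factor_poly L r) u = of_real r * (1 - u) * poly (mean_power_quot L) (of_real r * u) *
     (1 + poly (mean_power_poly L) (of_real r * u))"
  by (simp add: factor_poly_def poly_pcompose algebra_simps)

lemma poly_filter_poly: "poly (filter_poly L r ws) z = 1 - (\<Prod>w\<leftarrow>ws. poly (factor_poly L r) (w * z))"
proof -
  have "poly (\<Prod>w\<leftarrow>ws. pcompose (factor_poly L r) [:0, w:]) z = (\<Prod>w\<leftarrow>ws. poly (factor_poly L r) (w * z))"
    by (induction ws) (simp_all add: poly_pcompose mult.commute)
  then show ?thesis
    by (simp add: filter_poly_def)
qed

lemma degree_pcompose_scale_le: "degree (pcompose p [:0, a:]) \<le> degree (p :: complex poly)"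
  by (simp add: degree_pcompose)

lemma degree_mean_power_poly: "degree (mean_power_poly L) \<le> L"
  unfolding mean_power_poly_def
  by (intro order.trans[OF degree_smult_le] degree_sum_le) (auto intro: order.trans[OF degree_monom_le])

lemma degree_mean_power_quot: "degree (mean_power_quot L) \<le> L - 1"
  unfolding mean_power_quot_def
  by (intro order.trans[OF degree_smult_le] degree_sum_le) (auto intro: order.trans[OF degree_monom_le])

lemma degree_factor_poly:
  assumes "1 \<le> L"
  shows "degree (factor_poly L r) \<le> 2 * L"
proof -
  let ?H = "pcompose (mean_power_quot L) [:0, of_real r:]"
  let ?E = "pcompose (mean_power_poly L) [:0, of_real r:]"
  have "degree ?H \<le> L - 1"
    using degree_pcompose_scale_le degree_mean_power_quot by (rule order.trans)
  moreover have "degree (1 + ?E) \<le> L"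
    using order.trans[OF degree_pcompose_scale_le degree_mean_power_poly]
    by (intro degree_add_le) auto
  moreover have "degree ([:1, -1:] :: complex poly) \<le> 1"
    by simp
  ultimately have "degree ([:1, -1:] * ?H * (1 + ?E)) \<le> 1 + (L - 1) + L"
    by (intro order.trans[OF degree_mult_le] add_mono order.trans[OF degree_mult_le])
  then show ?thesis
    unfolding factor_poly_def using assms by (intro order.trans[OF degree_smult_le]) simp
qed

lemma degree_filter_poly:
  assumes "1 \<le> L"
  shows "degree (filter_poly L r ws) \<le> 2 * L * length ws"
proof -
  have factor: "degree (pcompose (factor_poly L r) [:0, w:]) \<le> 2 * L" for w
    using degree_pcompose_scale_le degree_factor_poly[OF assms] by (rule order.trans)
  have "degree (\<Prod>w\<leftarrow>ws. pcompose (factor_poly L r) [:0, w:]) \<le> 2 * L * length ws"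
  proof (induction ws)
    case (Cons w ws)
    then show ?case
      using factor[of w] by (simp add: order.trans[OF degree_mult_le])
  qed simp
  then show ?thesis
    unfolding filter_poly_def by (intro degree_diff_le) simp_all
qed

lemma linear_factor_dvd_factor_poly: "[:1, -w:] dvd pcompose (factor_poly L r) [:0, w:]"
proof -
  have "[:1, -1:] dvd factor_poly L r"
    unfolding factor_poly_def mult.assoc by (intro dvd_smult dvd_triv_left)
  then obtain q where "factor_poly L r = [:1, -1:] * q"
    by (rule dvdE)
  moreover have "pcompose [:1, -1:] [:0, w:] = [:1, -w:]"
    by (simp add: pcompose_pCons)
  ultimately have "pcompose (factor_poly L r) [:0, w:] = [:1, -w:] * pcompose q [:0, w:]"
    by (simp only: pcompose_mult)
  then show ?thesis
    by (simp only: dvd_triv_left)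
qed

lemma prod_linear_factors_dvd_one_minus_filter_poly:
  "(\<Prod>w\<leftarrow>ws. [:1, -w:]) dvd 1 - filter_poly L r ws"
proof -
  have "(\<Prod>w\<leftarrow>ws. [:1, -w:]) dvd (\<Prod>w\<leftarrow>ws. pcompose (factor_poly L r) [:0, w:])"
  proof (induction ws)
    case (Cons w ws)
    then show ?case
      unfolding list.map prod_list.Cons by (intro mult_dvd_mono linear_factor_dvd_factor_poly)
  qed simp
  then show ?thesis
    by (simp add: filter_poly_def)
qed

lemma one_minus_mult_mean_power_poly:
  "(1 - x) * poly (mean_power_poly L) x = (1 - x ^ (L + 1)) / of_nat (L + 1)"
  by (simp only: poly_mean_power_poly times_divide_eq_right sum_gp_basic) simp

lemma one_minus_mult_mean_power_quot:
  "(1 - x) * poly (mean_power_quot L) x = 1 - poly (mean_power_poly L) x"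
proof -
  have "(1 - x) * (\<Sum>j\<le>L. \<Sum>i<j. x ^ i) = (\<Sum>j\<le>L. 1 - x ^ j)"
    by (simp add: sum_distrib_left one_diff_power_eq)
  also have "\<dots> = of_nat (L + 1) - (\<Sum>j\<le>L. x ^ j)"
    by (simp add: sum_subtractf)
  finally show ?thesis
    by (simp add: poly_mean_power_quot poly_mean_power_poly diff_divide_distrib del: of_nat_Suc)
qed

lemma one_minus_scaled_mult_factor_poly:
  "(1 - of_real r * u) * poly (factor_poly L r) u =
     of_real r * (1 - u) * (1 - poly (mean_power_poly L) (of_real r * u) ^ 2)"
proof -
  let ?x = "of_real r * u"
  have "(1 - ?x) * poly (factor_poly L r) u =
      of_real r * (1 - u) * ((1 - ?x) * poly (mean_power_quot L) ?x) * (1 + poly (mean_power_poly L) ?x)"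
    by (simp only: poly_factor_poly mult_ac)
  then show ?thesis
    by (simp only: one_minus_mult_mean_power_quot) (simp add: power2_eq_square algebra_simps)
qed

section \<open>Bounds for a single factor\<close>

lemma norm_one_minus_scaled_ge:
  assumes "0 \<le> r" "r \<le> 1" "cmod u \<le> 1"
  shows "(r * cmod (1 - u))\<^sup>2 + (1 - r)\<^sup>2 \<le> (cmod (1 - of_real r * u))\<^sup>2"
proof -
  have "Re u \<le> 1"
    using assms(3) abs_Re_le_cmod[of u] by linarith
  have "(cmod (1 - of_real r * u))\<^sup>2 - (r * cmod (1 - u))\<^sup>2 - (1 - r)\<^sup>2 = 2 * r * (1 - r) * (1 - Re u)"
    by (simp only: power_mult_distrib cmod_power2) (simp add: power2_eq_square algebra_simps)
  moreover have "0 \<le> 2 * r * (1 - r) * (1 - Re u)"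
    using assms \<open>Re u \<le> 1\<close> by simp
  ultimately show ?thesis
    by linarith
qed

lemma norm_mean_power_poly_mult_le:
  assumes "cmod x \<le> 1"
  shows "cmod (poly (mean_power_poly L) x) * cmod (1 - x) \<le> 2 / real (L + 1)"
proof -
  have "cmod (1 - x ^ (L + 1)) \<le> cmod (1 :: complex) + cmod (x ^ (L + 1))"
    by (rule norm_triangle_ineq4)
  also have "\<dots> \<le> 2"
    using power_le_one[OF norm_ge_zero assms, of "L + 1"] by (simp add: norm_mult norm_power)
  finally have "cmod ((1 - x) * poly (mean_power_poly L) x) \<le> 2 / real (L + 1)"
    unfolding one_minus_mult_mean_power_poly by (simp add: norm_divide divide_right_mono del: of_nat_Suc)
  then show ?thesis
    by (simp add: norm_mult mult.commute)
qed

text \<open>Used with \<open>b = \<bar>1 - r u\<bar>\<close>, \<open>c = r \<bar>1 - u\<bar>\<close>, \<open>e = 1 - r\<close> and \<open>\<eta> = \<bar>E(r u)\<bar>\<close>.\<close>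

lemma factor_estimates_real:
  fixes b c e \<eta> :: real
  assumes "0 < e" "e \<le> b" "0 \<le> c" "c\<^sup>2 + e\<^sup>2 \<le> b\<^sup>2" "0 \<le> \<eta>" "\<eta> * b \<le> e / 2"
  shows "c * (1 + \<eta>\<^sup>2) \<le> b" and "e + c * \<eta>\<^sup>2 \<le> 5 / 4 * e"
proof -
  define T where "T = e\<^sup>2 / b\<^sup>2"
  have "b > 0"
    using assms by linarith
  have "e\<^sup>2 \<le> b\<^sup>2"
    using assms by (intro power_mono) simp_all
  then have T: "0 \<le> T" "T \<le> 1"
    using \<open>b > 0\<close> by (simp_all add: T_def)
  have "\<eta>\<^sup>2 * b\<^sup>2 \<le> e\<^sup>2 / 4"
    using power_mono[OF assms(6), of 2] assms by (simp add: power_mult_distrib power_divide)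
  then have \<eta>: "\<eta>\<^sup>2 \<le> T / 4"
    using \<open>b > 0\<close> by (simp add: T_def pos_le_divide_eq)
  have "c\<^sup>2 \<le> b\<^sup>2 * (1 - T)"
    using assms \<open>b > 0\<close> by (simp add: T_def right_diff_distrib)
  then have "(c * (1 + \<eta>\<^sup>2))\<^sup>2 \<le> (b\<^sup>2 * (1 - T)) * (1 + T / 4)\<^sup>2"
    unfolding power_mult_distrib using \<eta> T by (intro mult_mono power_mono) simp_all
  also have "\<dots> = b\<^sup>2 * (1 - T / 2 - 7 * T\<^sup>2 / 16 - T ^ 3 / 16)"
    by (simp add: power2_eq_square power3_eq_cube field_simps)
  also have "\<dots> \<le> b\<^sup>2"
    by (intro mult_left_le) (use T zero_le_power[of T 2] zero_le_power[of T 3] in linarith, simp)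
  finally show "c * (1 + \<eta>\<^sup>2) \<le> b"
    by (rule power2_le_imp_le) (use \<open>b > 0\<close> in simp)
  have "c\<^sup>2 \<le> b\<^sup>2"
    using assms(4) zero_le_power2[of e] by linarith
  then have "c \<le> b"
    by (rule power2_le_imp_le) (use \<open>b > 0\<close> in simp)
  then have "c * \<eta>\<^sup>2 \<le> b * (T / 4)"
    using \<eta> assms by (intro mult_mono) simp_all
  also have "\<dots> = e / 4 * (e / b)"
    using \<open>b > 0\<close> by (simp add: T_def power2_eq_square)
  also have "\<dots> \<le> e / 4"
    using assms \<open>b > 0\<close> by (intro mult_left_le) simp_all
  finally show "e + c * \<eta>\<^sup>2 \<le> 5 / 4 * e"
    by simp
qed
lemma norm_factor_poly_le:
  fixes L :: nat and r :: real and u :: complex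
  assumes "0 \<le> r" "r \<le> 1"
  defines "E \<equiv> poly (mean_power_poly L) (of_real r * u)"
  shows "cmod (1 - of_real r * u) * cmod (poly (factor_poly L r) u) \<le> r * cmod (1 - u) * (1 + (cmod E)\<^sup>2)"
    and "cmod (1 - of_real r * u) * cmod (1 - poly (factor_poly L r) u) \<le>
      (1 - r) + r * cmod (1 - u) * (cmod E)\<^sup>2"
proof -
  have factor_eq: "(1 - of_real r * u) * poly (factor_poly L r) u = of_real r * (1 - u) * (1 - E ^ 2)"
    unfolding E_def by (rule one_minus_scaled_mult_factor_poly)
  have "cmod (1 - E ^ 2) \<le> 1 + (cmod E)\<^sup>2"
    using norm_triangle_ineq4[of 1 "E ^ 2"] by (simp add: norm_power)
  then show "cmod (1 - of_real r * u) * cmod (poly (factor_poly L r) u) \<le> r * cmod (1 - u) * (1 + (cmod E)\<^sup>2)"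
    using arg_cong[OF factor_eq, of cmod] assms(1) by (simp add: norm_mult mult_left_mono)
  have "(1 - of_real r * u) * (1 - poly (factor_poly L r) u) = of_real (1 - r) + of_real r * (1 - u) * E ^ 2"
    by (simp add: right_diff_distrib factor_eq)
  then have "cmod (1 - of_real r * u) * cmod (1 - poly (factor_poly L r) u) =
      cmod (of_real (1 - r) + of_real r * (1 - u) * E ^ 2)"
    by (simp only: norm_mult[symmetric])
  also have "\<dots> \<le> (1 - r) + r * cmod (1 - u) * (cmod E)\<^sup>2"
    using norm_triangle_ineq[of "of_real (1 - r)" "of_real r * (1 - u) * E ^ 2"] assms
    by (simp add: norm_mult norm_power del: of_real_diff)
  finally show "cmod (1 - of_real r * u) * cmod (1 - poly (factor_poly L r) u) \<le>
      (1 - r) + r * cmod (1 - u) * (cmod E)\<^sup>2" .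
qed

lemma damped_point_estimates:
  assumes r: "r = 1 - 4 / real (L + 1)" and "3 \<le> L" and "cmod u \<le> 1"
  shows "1 - r \<le> cmod (1 - of_real r * u)"
    and "(r * cmod (1 - u))\<^sup>2 + (1 - r)\<^sup>2 \<le> (cmod (1 - of_real r * u))\<^sup>2"
    and "cmod (poly (mean_power_poly L) (of_real r * u)) * cmod (1 - of_real r * u) \<le> (1 - r) / 2"
proof -
  have "0 \<le> r" "r \<le> 1"
    using \<open>3 \<le> L\<close> by (simp_all add: r field_simps)
  have "cmod (of_real r * u) \<le> r"
    using \<open>0 \<le> r\<close> \<open>cmod u \<le> 1\<close> by (simp add: norm_mult mult_left_le)
  then show "1 - r \<le> cmod (1 - of_real r * u)"
    using norm_triangle_ineq2[of 1 "of_real r * u"] by simp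
  show "(r * cmod (1 - u))\<^sup>2 + (1 - r)\<^sup>2 \<le> (cmod (1 - of_real r * u))\<^sup>2"
    by (rule norm_one_minus_scaled_ge) fact+
  have "cmod (poly (mean_power_poly L) (of_real r * u)) * cmod (1 - of_real r * u) \<le> 2 / real (L + 1)"
    using \<open>cmod (of_real r * u) \<le> r\<close> \<open>r \<le> 1\<close> by (intro norm_mean_power_poly_mult_le) simp
  also have "2 / real (L + 1) = (1 - r) / 2"
    by (simp add: r field_simps)
  finally show "cmod (poly (mean_power_poly L) (of_real r * u)) * cmod (1 - of_real r * u) \<le> (1 - r) / 2" .
qed

lemma factor_poly_bounds:
  assumes r: "r = 1 - 4 / real (L + 1)" and "3 \<le> L" and "cmod u \<le> 1"
  shows "cmod (poly (factor_poly L r) u) \<le> 1"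
    and "cmod (1 - of_real r * u) * cmod (1 - poly (factor_poly L r) u) \<le> 5 / 4 * (4 / real (L + 1))"
proof -
  have "0 < 1 - r" "0 \<le> r" "r \<le> 1"
    using \<open>3 \<le> L\<close> by (simp_all add: r field_simps)
  note damped = damped_point_estimates[OF assms]
  note est = factor_estimates_real[OF \<open>0 < 1 - r\<close> damped(1) _ damped(2) norm_ge_zero damped(3)]
  note norms = norm_factor_poly_le[OF \<open>0 \<le> r\<close> \<open>r \<le> 1\<close>, of u L]
  have "cmod (1 - of_real r * u) * cmod (poly (factor_poly L r) u) \<le> cmod (1 - of_real r * u) * 1"
    using norms(1) est(1) \<open>0 \<le> r\<close> by simp
  then show "cmod (poly (factor_poly L r) u) \<le> 1"
    by (rule mult_left_le_imp_le) (use \<open>0 < 1 - r\<close> damped(1) in linarith)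
  show "cmod (1 - of_real r * u) * cmod (1 - poly (factor_poly L r) u) \<le> 5 / 4 * (4 / real (L + 1))"
    using norms(2) est(2) \<open>0 \<le> r\<close> by (simp add: r)
qed

section \<open>Distances on the unit circle and the DFT grid\<close>

lemma sin_ge_third:
  fixes x :: real
  assumes "0 \<le> x" "x \<le> 2"
  shows "x \<le> 3 * sin x"
proof -
  have "(\<Sum>m<3. sin_coeff m * x ^ m) = x"
    by (simp add: eval_nat_numeral sin_coeff_Suc cos_coeff_Suc)
  then have "\<bar>sin x - x\<bar> \<le> inverse (fact 3) * \<bar>x\<bar> ^ 3"
    using Maclaurin_sin_bound[of x 3] by (simp only:)
  then have "\<bar>sin x - x\<bar> \<le> x ^ 3 / 6"
    using assms by (simp add: eval_nat_numeral)
  moreover have "x ^ 3 \<le> 4 * x"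
    using assms mult_left_mono[of "x\<^sup>2" 4 x] power_mono[of x 2 2]
    by (simp add: power3_eq_cube power2_eq_square mult.commute)
  ultimately show ?thesis
    by linarith
qed

lemma norm_one_minus_scaled_cis_sq:
  "(cmod (1 - of_real \<rho> * cis t))\<^sup>2 = (1 - \<rho>)\<^sup>2 + 2 * \<rho> * (1 - cos t)"
proof -
  have "(cmod (1 - of_real \<rho> * cis t))\<^sup>2 = (1 - \<rho> * cos t)\<^sup>2 + (\<rho> * sin t)\<^sup>2"
    by (simp add: cmod_power2)
  also have "(\<rho> * sin t)\<^sup>2 = \<rho>\<^sup>2 - (\<rho> * cos t)\<^sup>2"
    by (simp add: power_mult_distrib sin_squared_eq right_diff_distrib)
  finally show ?thesis
    by (simp add: power2_eq_square algebra_simps)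
qed

lemma norm_one_minus_cis_ge:
  assumes "\<bar>t\<bar> \<le> pi"
  shows "\<bar>t\<bar> \<le> 3 * cmod (1 - cis t)"
proof (rule power2_le_imp_le)
  define x where "x = \<bar>t\<bar> / 2"
  have "0 \<le> x" "x \<le> 2" "\<bar>t\<bar> = 2 * x"
    using assms pi_less_4 by (simp_all add: x_def)
  then have "\<bar>t\<bar>\<^sup>2 \<le> (3 * (2 * sin x))\<^sup>2"
    using sin_ge_third[of x] by (intro power_mono) simp_all
  also have "\<dots> = 3\<^sup>2 * (2 * sin x)\<^sup>2"
    by (rule power_mult_distrib)
  also have "(2 * sin x)\<^sup>2 = 2 * (1 - cos \<bar>t\<bar>)"
    using cos_double_sin[of x] \<open>\<bar>t\<bar> = 2 * x\<close> by (simp add: power_mult_distrib)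
  also have "\<dots> = (cmod (1 - cis t))\<^sup>2"
    using norm_one_minus_scaled_cis_sq[of 1 t] by simp
  finally show "\<bar>t\<bar>\<^sup>2 \<le> (3 * cmod (1 - cis t))\<^sup>2"
    by (simp only: power_mult_distrib)
qed simp

lemma norm_one_minus_scaled_cis_ge:
  assumes "0 \<le> \<rho>" "\<rho> \<le> 1"
  shows "3 / 8 * cmod (1 - cis t) \<le> cmod (1 - of_real \<rho> * cis t)"
proof (rule power2_le_imp_le)
  have "0 \<le> 1 - cos t" "1 - cos t \<le> 2"
    by simp_all
  have "9 / 32 * (1 - cos t) \<le> (1 - \<rho>)\<^sup>2 + 2 * \<rho> * (1 - cos t)"
  proof (cases "\<rho> \<le> 1 / 4")
    case True
    have "9 / 32 * (1 - cos t) \<le> 9 / 16"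
      using mult_left_mono[OF \<open>1 - cos t \<le> 2\<close>, of "9 / 32"] by simp
    also have "\<dots> = (3 / 4)\<^sup>2"
      by (simp add: power2_eq_square)
    also have "\<dots> \<le> (1 - \<rho>)\<^sup>2"
      using True by (intro power_mono) simp_all
    also have "\<dots> \<le> (1 - \<rho>)\<^sup>2 + 2 * \<rho> * (1 - cos t)"
      using assms \<open>0 \<le> 1 - cos t\<close> by simp
    finally show ?thesis .
  next
    case False
    then have "9 / 32 * (1 - cos t) \<le> 2 * \<rho> * (1 - cos t)"
      using \<open>0 \<le> 1 - cos t\<close> by (intro mult_right_mono) simp_all
    then show ?thesis
      using zero_le_power2[of "1 - \<rho>"] by linarith
  qed
  moreover have "(3 / 8 * cmod (1 - cis t))\<^sup>2 = 9 / 32 * (1 - cos t)"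
    using norm_one_minus_scaled_cis_sq[of 1 t] unfolding power_mult_distrib by (simp add: power2_eq_square)
  ultimately show "(3 / 8 * cmod (1 - cis t))\<^sup>2 \<le> (cmod (1 - of_real \<rho> * cis t))\<^sup>2"
    by (simp only: norm_one_minus_scaled_cis_sq)
qed simp

lemma norm_one_minus_cis_ge_min:
  assumes "0 \<le> y" "y \<le> 2 * pi"
  shows "min y (2 * pi - y) \<le> 3 * cmod (1 - cis y)"
proof (cases "y \<le> pi")
  case True
  then have "min y (2 * pi - y) = \<bar>y\<bar>"
    using assms by (simp add: min_absorb1)
  also have "\<dots> \<le> 3 * cmod (1 - cis y)"
    using True assms by (intro norm_one_minus_cis_ge) simp
  finally show ?thesis .
next
  case False
  then have "min y (2 * pi - y) = \<bar>y - 2 * pi\<bar>"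
    using assms by (simp add: min_absorb2)
  also have "\<dots> \<le> 3 * cmod (1 - cis (y - 2 * pi))"
    using False assms by (intro norm_one_minus_cis_ge) simp
  also have "cis (y - 2 * pi) = cis y"
    using cis_mult[of "y - 2 * pi" "2 * pi"] by simp
  finally show ?thesis .
qed

definition grid_offset :: "nat \<Rightarrow> real \<Rightarrow> nat \<Rightarrow> nat" where
  "grid_offset N \<alpha> k = nat ((\<lfloor>\<alpha> * real N / (2 * pi)\<rfloor> - int k) mod int N)"

lemma grid_offset_less: "1 \<le> N \<Longrightarrow> grid_offset N \<alpha> k < N"
  by (simp add: grid_offset_def nat_less_iff)

lemma bij_betw_grid_offset:
  assumes "1 \<le> N"
  shows "bij_betw (grid_offset N \<alpha>) {..<N} {..<N}"
proof -
  have "grid_offset N \<alpha> (grid_offset N \<alpha> k) = k" if "k < N" for k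
    using assms that by (simp add: grid_offset_def mod_diff_right_eq)
  moreover have "grid_offset N \<alpha> ` {..<N} \<subseteq> {..<N}"
    using grid_offset_less[OF assms] by auto
  ultimately show ?thesis
    by (intro bij_betw_byWitness[where f' = "grid_offset N \<alpha>"]) auto
qed

lemma grid_angle_reduction:
  fixes N k :: nat and \<alpha> :: real
  assumes N: "1 \<le> N"
  defines "m \<equiv> grid_offset N \<alpha> k"
  obtains y where "cis (\<alpha> - 2 * pi * real k / real N) = cis y"
    and "2 * pi * real m / real N \<le> y" and "2 * pi * real (N - 1 - m) / real N \<le> 2 * pi - y"
proof -
  define \<beta> where "\<beta> = \<alpha> * real N / (2 * pi)"
  define f where "f = \<beta> - of_int \<lfloor>\<beta>\<rfloor>"
  define q where "q = (\<lfloor>\<beta>\<rfloor> - int k) div int N"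
  define y where "y = 2 * pi * (f + real m) / real N"
  have "m < N"
    using grid_offset_less[OF N] by (simp add: m_def)
  have "0 \<le> f" "f < 1"
    using frac_ge_0[of \<beta>] frac_lt_1[of \<beta>] by (simp_all add: f_def frac_def)
  have "\<lfloor>\<beta>\<rfloor> - int k = int m + int N * q"
    using N by (simp add: m_def grid_offset_def \<beta>_def q_def)
  then have "of_int \<lfloor>\<beta>\<rfloor> - real k = real m + real N * of_int q"
    by (metis of_int_add of_int_diff of_int_mult of_int_of_nat_eq)
  then have "\<beta> - real k = f + real m + real N * of_int q"
    unfolding f_def by linarith
  then have "\<alpha> - 2 * pi * real k / real N = y + 2 * pi * of_int q"
    using N by (simp add: y_def \<beta>_def field_simps)
  then have "cis (\<alpha> - 2 * pi * real k / real N) = cis y"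
    by (simp add: cis_mult[symmetric])
  moreover have "2 * pi * real m / real N \<le> y"
    using \<open>0 \<le> f\<close> by (simp add: y_def divide_right_mono)
  moreover have "2 * pi * real (N - 1 - m) / real N \<le> 2 * pi - y"
  proof -
    have "real (N - 1 - m) \<le> real N - (f + real m)"
      using \<open>m < N\<close> \<open>f < 1\<close> by (simp add: of_nat_diff)
    then have "2 * pi * real (N - 1 - m) / real N \<le> 2 * pi * (real N - (f + real m)) / real N"
      by (intro divide_right_mono mult_left_mono) simp_all
    also have "\<dots> = 2 * pi - y"
      using N by (simp add: y_def field_simps)
    finally show ?thesis .
  qed
  ultimately show ?thesis
    using that by blast
qed

lemma norm_one_minus_cis_grid_ge:
  fixes N k :: nat and \<alpha> :: real
  assumes N: "1 \<le> N"
  defines "m \<equiv> grid_offset N \<alpha> k"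
  shows "2 * real (min m (N - 1 - m)) / real N \<le> cmod (1 - cis (\<alpha> - 2 * pi * real k / real N))"
proof -
  obtain y where "cis (\<alpha> - 2 * pi * real k / real N) = cis y"
    and y_lower: "2 * pi * real m / real N \<le> y" and y_upper: "2 * pi * real (N - 1 - m) / real N \<le> 2 * pi - y"
    using grid_angle_reduction[OF N, of \<alpha> k] unfolding m_def by blast
  have "0 \<le> 2 * pi * real m / real N" "0 \<le> 2 * pi * real (N - 1 - m) / real N"
    by simp_all
  then have "0 \<le> y" "y \<le> 2 * pi"
    using y_lower y_upper by linarith+
  define d where "d = real (min m (N - 1 - m)) / real N"
  have "0 \<le> d"
    by (simp add: d_def)
  have "2 * pi * d \<le> 2 * pi * real m / real N" "2 * pi * d \<le> 2 * pi * real (N - 1 - m) / real N"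
    by (simp_all add: d_def divide_right_mono)
  then have "2 * (pi * d) \<le> min y (2 * pi - y)"
    using y_lower y_upper by (simp add: mult.assoc)
  moreover have "3 * d \<le> pi * d"
    using mult_right_mono[OF less_imp_le[OF pi_gt3] \<open>0 \<le> d\<close>] .
  moreover have "min y (2 * pi - y) \<le> 3 * cmod (1 - cis y)"
    by (rule norm_one_minus_cis_ge_min) fact+
  ultimately have "2 * d \<le> cmod (1 - cis y)"
    by linarith
  then show ?thesis
    using \<open>cis (\<alpha> - 2 * pi * real k / real N) = cis y\<close> by (simp add: d_def)
qed

lemma sum_inverse_le_one_plus_ln:
  assumes "1 \<le> N"
  shows "(\<Sum>m<N. inverse (real m)) \<le> 1 + ln (real N)"
proof -
  obtain M where M: "N = Suc M"
    using assms by (cases N) auto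
  then have "(\<Sum>m<N. inverse (real m)) = harm M"
    by (simp only: sum.lessThan_Suc_shift) (simp add: harm_altdef)
  also have "\<dots> \<le> harm N"
    by (rule harm_mono) (simp add: M)
  also have "\<dots> \<le> 1 + ln (real N)"
    using euler_mascheroni_sequence_decreasing[of 1 N] assms by (simp add: harm_def)
  finally show ?thesis .
qed

lemma sum_inverse_min_le:
  assumes "1 \<le> N"
  shows "(\<Sum>m<N. inverse (real (min m (N - 1 - m)))) \<le> 2 * (1 + ln (real N))"
proof -
  have inverse_min: "inverse (real (min a b)) \<le> inverse (real a) + inverse (real b)" for a b :: nat
    by (cases "a \<le> b") (simp_all add: min_def)
  have "(\<Sum>m<N. inverse (real (min m (N - 1 - m)))) \<le>
      (\<Sum>m<N. inverse (real m)) + (\<Sum>m<N. inverse (real (N - 1 - m)))"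
    unfolding sum.distrib[symmetric] by (intro sum_mono inverse_min)
  also have "(\<Sum>m<N. inverse (real (N - 1 - m))) = (\<Sum>m<N. inverse (real m))"
    using sum.nat_diff_reindex[of "\<lambda>m. inverse (real m)" N] by simp
  finally show ?thesis
    using sum_inverse_le_one_plus_ln[OF assms] by argo
qed

section \<open>Sums over the DFT grid\<close>

lemma norm_one_minus_prod_list_le:
  fixes bs :: "'a :: real_normed_algebra_1 list"
  assumes "\<forall>b\<in>set bs. norm b \<le> 1"
  shows "norm (1 - prod_list bs) \<le> (\<Sum>b\<leftarrow>bs. norm (1 - b))"
  using assms
proof (induction bs)
  case (Cons b bs)
  have "norm (1 - prod_list (b # bs)) = norm ((1 - b) + b * (1 - prod_list bs))"
    by (simp add: algebra_simps)
  also have "\<dots> \<le> norm (1 - b) + norm b * norm (1 - prod_list bs)"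
    by (intro order.trans[OF norm_triangle_ineq] add_left_mono norm_mult_ineq)
  also have "\<dots> \<le> norm (1 - b) + norm (1 - prod_list bs)"
    using Cons.prems by (simp add: mult_left_le_one_le)
  finally show ?case
    using Cons by simp
qed simp

lemma norm_prod_list_le_1:
  fixes bs :: "'a :: real_normed_algebra_1 list"
  assumes "\<forall>b\<in>set bs. norm b \<le> 1"
  shows "norm (prod_list bs) \<le> 1"
  using assms
proof (induction bs)
  case (Cons b bs)
  then show ?case
    using norm_mult_ineq[of b "prod_list bs"] mult_le_one[of "norm b" "norm (prod_list bs)"] by simp
qed simp

lemma sum_sum_list_le:
  fixes f :: "'a \<Rightarrow> 'b \<Rightarrow> real"
  assumes "\<And>w. w \<in> set ws \<Longrightarrow> (\<Sum>k\<in>K. f k w) \<le> B"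
  shows "(\<Sum>k\<in>K. \<Sum>w\<leftarrow>ws. f k w) \<le> real (length ws) * B"
  using assms by (induction ws) (auto simp: sum.distrib algebra_simps intro: add_mono)

lemma norm_one_minus_scaled_grid_ge:
  fixes N k :: nat and r :: real and w :: complex
  assumes "0 \<le> r" "r \<le> 1" "cmod w \<le> 1" "1 \<le> N"
  defines "m \<equiv> grid_offset N (Arg w) k"
  shows "3 / 4 * (real (min m (N - 1 - m)) / real N) \<le>
    cmod (1 - of_real r * (w * cis (- (2 * pi * real k / real N))))"
proof -
  define \<rho> where "\<rho> = cmod w"
  define \<alpha> where "\<alpha> = Arg w"
  define t where "t = \<alpha> - 2 * pi * real k / real N"
  have "w = of_real \<rho> * cis \<alpha>"
    using rcis_cmod_Arg[of w] by (simp add: rcis_def \<rho>_def \<alpha>_def)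
  then have "of_real r * (w * cis (- (2 * pi * real k / real N))) = of_real (r * \<rho>) * cis t"
    unfolding t_def by (simp only: of_real_mult mult.assoc cis_mult) simp
  then have "3 / 8 * cmod (1 - cis t) \<le> cmod (1 - of_real r * (w * cis (- (2 * pi * real k / real N))))"
    using assms by (simp only:) (rule norm_one_minus_scaled_cis_ge, simp_all add: \<rho>_def mult_le_one)
  moreover have "2 * real (min m (N - 1 - m)) / real N \<le> cmod (1 - cis t)"
    unfolding m_def t_def \<alpha>_def by (rule norm_one_minus_cis_grid_ge) fact
  ultimately show ?thesis
    by linarith
qed

lemma norm_one_minus_factor_poly_grid_le:
  fixes L N k :: nat and r :: real and w :: complex
  assumes r: "r = 1 - 4 / real (L + 1)" and "3 \<le> L" and "cmod w \<le> 1" and "1 \<le> N"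
  defines "d \<equiv> min (grid_offset N (Arg w) k) (N - 1 - grid_offset N (Arg w) k)"
  shows "cmod (1 - poly (factor_poly L r) (w * cis (- (2 * pi * real k / real N)))) \<le>
    (if d = 0 then 2 else 0) + 5 / 3 * (4 / real (L + 1)) * real N * inverse (real d)"
proof -
  define u where "u = w * cis (- (2 * pi * real k / real N))"
  have "cmod u \<le> 1"
    using \<open>cmod w \<le> 1\<close> by (simp add: u_def norm_mult)
  note bounds = factor_poly_bounds[OF r \<open>3 \<le> L\<close> this]
  have "0 \<le> r" "r \<le> 1"
    using \<open>3 \<le> L\<close> by (simp_all add: r field_simps)
  then have lower: "3 / 4 * (real d / real N) \<le> cmod (1 - of_real r * u)"
    unfolding u_def d_def using assms by (intro norm_one_minus_scaled_grid_ge)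
  show ?thesis
  proof (cases "d = 0")
    case True
    have "cmod (1 - poly (factor_poly L r) u) \<le> 1 + cmod (poly (factor_poly L r) u)"
      using norm_triangle_ineq4[of 1 "poly (factor_poly L r) u"] by simp
    with bounds(1) True show ?thesis
      by (simp add: u_def)
  next
    case False
    have "0 < 3 / 4 * (real d / real N)"
      using False \<open>1 \<le> N\<close> by simp
    moreover have "3 / 4 * (real d / real N) * cmod (1 - poly (factor_poly L r) u) \<le> 5 / 4 * (4 / real (L + 1))"
      using order.trans[OF mult_right_mono[OF lower norm_ge_zero] bounds(2)] .
    ultimately have "cmod (1 - poly (factor_poly L r) u) \<le> 5 / 4 * (4 / real (L + 1)) / (3 / 4 * (real d / real N))"
      by (simp only: pos_le_divide_eq mult.commute)
    also have "\<dots> = 5 / 3 * (4 / real (L + 1)) * real N * inverse (real d)"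
      using False \<open>1 \<le> N\<close> by (simp add: field_simps del: of_nat_Suc)
    finally show ?thesis
      using False by (simp add: u_def)
  qed
qed

lemma sum_grid_norm_one_minus_factor_poly_le:
  fixes L N :: nat and r :: real and w :: complex
  assumes r: "r = 1 - 4 / real (L + 1)" and "3 \<le> L" and "cmod w \<le> 1" and "1 \<le> N"
  shows "(\<Sum>k<N. cmod (1 - poly (factor_poly L r) (w * cis (- (2 * pi * real k / real N))))) \<le>
    4 + 10 / 3 * (4 / real (L + 1)) * real N * (1 + ln (real N))"
proof -
  define K where "K = 5 / 3 * (4 / real (L + 1)) * real N"
  define h where "h m = (if min m (N - 1 - m) = 0 then 2 else 0) + K * inverse (real (min m (N - 1 - m)))"
    for m
  have "(\<Sum>k<N. cmod (1 - poly (factor_poly L r) (w * cis (- (2 * pi * real k / real N))))) \<le>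
      (\<Sum>k<N. h (grid_offset N (Arg w) k))"
    unfolding h_def K_def by (intro sum_mono norm_one_minus_factor_poly_grid_le[OF assms])
  also have "\<dots> = (\<Sum>m<N. h m)"
    by (rule sum.reindex_bij_betw[OF bij_betw_grid_offset[OF \<open>1 \<le> N\<close>]])
  also have "\<dots> = (\<Sum>m<N. if min m (N - 1 - m) = 0 then 2 else 0) +
      K * (\<Sum>m<N. inverse (real (min m (N - 1 - m))))"
    by (simp add: h_def sum.distrib sum_distrib_left)
  also have "\<dots> \<le> (\<Sum>m<N. (if m = 0 then 2 else 0) + (if m = N - 1 then 2 else 0)) + K * (2 * (1 + ln (real N)))"
    using sum_inverse_min_le[OF \<open>1 \<le> N\<close>] by (intro add_mono sum_mono mult_left_mono) (auto simp: K_def)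
  also have "\<dots> = 4 + 10 / 3 * (4 / real (L + 1)) * real N * (1 + ln (real N))"
    using \<open>1 \<le> N\<close> by (simp add: sum.distrib K_def)
  finally show ?thesis .
qed

lemma norm_poly_filter_poly_le:
  assumes r: "r = 1 - 4 / real (L + 1)" and "3 \<le> L" and "\<forall>w\<in>set ws. cmod w \<le> 1" and "cmod z \<le> 1"
  shows "cmod (poly (filter_poly L r ws) z) \<le> 2"
proof -
  have "\<forall>w\<in>set ws. cmod (poly (factor_poly L r) (w * z)) \<le> 1"
    using assms by (auto intro!: factor_poly_bounds(1) simp: norm_mult mult_le_one)
  then have "cmod (\<Prod>w\<leftarrow>ws. poly (factor_poly L r) (w * z)) \<le> 1"
    using norm_prod_list_le_1[of "map (\<lambda>w. poly (factor_poly L r) (w * z)) ws"] by simp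
  then show ?thesis
    unfolding poly_filter_poly using norm_triangle_ineq4[of 1 "\<Prod>w\<leftarrow>ws. poly (factor_poly L r) (w * z)"]
    by simp
qed

lemma sum_grid_norm_poly_filter_poly_le:
  assumes r: "r = 1 - 4 / real (L + 1)" and "3 \<le> L" and "\<forall>w\<in>set ws. cmod w \<le> 1" and "1 \<le> N"
  shows "(\<Sum>k<N. cmod (poly (filter_poly L r ws) (cis (- (2 * pi * real k / real N))))) \<le>
    real (length ws) * (4 + 10 / 3 * (4 / real (L + 1)) * real N * (1 + ln (real N)))"
proof -
  have "cmod (poly (filter_poly L r ws) z) \<le> (\<Sum>w\<leftarrow>ws. cmod (1 - poly (factor_poly L r) (w * z)))"
    if "cmod z \<le> 1" for z
  proof -
    have "\<forall>w\<in>set ws. cmod (poly (factor_poly L r) (w * z)) \<le> 1"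
      using assms that by (auto intro!: factor_poly_bounds(1) simp: norm_mult mult_le_one)
    then show ?thesis
      unfolding poly_filter_poly
      using norm_one_minus_prod_list_le[of "map (\<lambda>w. poly (factor_poly L r) (w * z)) ws"]
      by (simp add: o_def)
  qed
  then have "(\<Sum>k<N. cmod (poly (filter_poly L r ws) (cis (- (2 * pi * real k / real N))))) \<le>
      (\<Sum>k<N. \<Sum>w\<leftarrow>ws. cmod (1 - poly (factor_poly L r) (w * cis (- (2 * pi * real k / real N)))))"
    by (intro sum_mono) simp
  also have "\<dots> \<le> real (length ws) * (4 + 10 / 3 * (4 / real (L + 1)) * real N * (1 + ln (real N)))"
    using assms by (intro sum_sum_list_le sum_grid_norm_one_minus_factor_poly_le) auto
  finally show ?thesis .
qed

lemma damping_times_grid_size_le: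
  assumes "1 \<le> s" "1 \<le> n"
  shows "4 / real (n div s + 1) * real (2 * n + 1) \<le> 12 * real s"
proof -
  define q where "q = real (n div s + 1)"
  have "s * (n div s) + n mod s = n" "n mod s < s"
    using assms by simp_all
  then have "n < s * (n div s) + s"
    by linarith
  then have "n < s * (n div s + 1)"
    by simp
  then have "real n < real s * q"
    unfolding q_def by (simp only: of_nat_mult[symmetric] of_nat_less_iff)
  then have "4 * real (2 * n + 1) \<le> 12 * real s * q"
    using assms by simp
  then have "4 * real (2 * n + 1) / q \<le> 12 * real s"
    by (simp add: q_def pos_divide_le_eq del: of_nat_Suc)
  then show ?thesis
    unfolding q_def times_divide_eq_left .
qed

lemma one_plus_ln_grid_size_le:
  assumes "1 \<le> n"
  shows "1 + ln (real (2 * n + 1)) \<le> 3 * ln (exp 1 * real n)"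
proof -
  have "ln (real (2 * n + 1)) \<le> ln (3 * real n)"
    using assms by (subst ln_le_cancel_iff) simp_all
  also have "\<dots> = ln 3 + ln (real n)"
    using assms by (simp add: ln_mult)
  also have "\<dots> \<le> 2 + ln (real n)"
    using ln_le_minus_one[of 3] by simp
  finally have "ln (real (2 * n + 1)) \<le> 2 + ln (real n)" .
  moreover have "0 \<le> ln (real n)" "ln (exp 1 * real n) = 1 + ln (real n)"
    using assms by (simp_all add: ln_mult)
  ultimately show ?thesis
    by linarith
qed

lemma filter_l1_constant_le:
  assumes "1 \<le> s" "4 * s \<le> n"
  shows "real s * (4 + 10 / 3 * (4 / real (n div s + 1)) * real (2 * n + 1) * (1 + ln (real (2 * n + 1))))
    \<le> 124 * real s ^ 2 * ln (exp 1 * real n)"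
proof -
  define A where "A = 4 / real (n div s + 1) * real (2 * n + 1)"
  define lg where "lg = ln (exp 1 * real n)"
  have "1 \<le> n"
    using assms by linarith
  then have "1 \<le> lg"
    by (simp add: lg_def ln_mult)
  have "A * (1 + ln (real (2 * n + 1))) \<le> 12 * real s * (3 * lg)"
    unfolding A_def lg_def using assms \<open>1 \<le> n\<close>
    by (intro mult_mono damping_times_grid_size_le one_plus_ln_grid_size_le) simp_all
  then have "10 / 3 * A * (1 + ln (real (2 * n + 1))) \<le> 120 * real s * lg"
    by (simp only: mult.assoc)
  then have "real s * (4 + 10 / 3 * A * (1 + ln (real (2 * n + 1)))) \<le> real s * (4 + 120 * real s * lg)"
    by (intro mult_left_mono add_left_mono) simp_all
  also have "\<dots> \<le> 124 * real s ^ 2 * lg"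
    using assms \<open>1 \<le> lg\<close> mult_mono[of 1 "real s" 1 lg] by (simp add: power2_eq_square algebra_simps)
  finally show ?thesis
    by (simp add: A_def lg_def mult_ac)
qed

lemma exists_reproducing_filter:
  assumes "1 \<le> s" "4 * s \<le> n" "length ws = s" "\<forall>w\<in>set ws. cmod w \<le> 1"
  shows "\<exists>\<phi>\<in>Cplus (2 * n). reproducing \<phi> (Xsp ws) \<and>
    (\<forall>k. cmod (dft_plus n \<phi> k) \<le> 2 / sqrt (real (2 * n + 1))) \<and>
    (\<Sum>k\<le>2 * n. cmod (dft_plus n \<phi> k)) \<le> 124 * real s ^ 2 * ln (exp 1 * real n) / sqrt (real (2 * n + 1))"
proof -
  define L where "L = n div s"
  define r where "r = 1 - 4 / real (L + 1)"
  define P where "P = filter_poly L r ws"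
  define \<zeta> where "\<zeta> k = cis (- (2 * pi * real k / real (2 * n + 1)))" for k
  have "4 \<le> L"
    using assms div_le_mono[of "4 * s" n s] by (simp add: L_def)
  have "degree P \<le> 2 * L * s"
    using degree_filter_poly[of L r ws] \<open>4 \<le> L\<close> assms by (simp add: P_def)
  also have "\<dots> \<le> 2 * n"
    by (simp add: L_def mult.commute)
  finally have deg: "degree P \<le> 2 * n" .
  have "cmod (poly P (\<zeta> k)) \<le> 2" for k
    unfolding P_def \<zeta>_def using assms \<open>4 \<le> L\<close> by (intro norm_poly_filter_poly_le[OF r_def]) simp_all
  moreover have "(\<Sum>k<2 * n + 1. cmod (poly P (\<zeta> k))) \<le> 124 * real s ^ 2 * ln (exp 1 * real n)"
    using sum_grid_norm_poly_filter_poly_le[OF r_def, of ws "2 * n + 1"] assms \<open>4 \<le> L\<close>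
      filter_l1_constant_le[OF assms(1,2)]
    by (simp add: P_def \<zeta>_def L_def)
  ultimately show ?thesis
    using norm_dft_plus_coeff_seq[OF deg] coeff_seq_in_Cplus[OF deg]
      reproducing_coeff_seq[OF prod_linear_factors_dvd_one_minus_filter_poly]
    by (auto simp: \<zeta>_def P_def divide_right_mono lessThan_Suc_atMost sum_divide_distrib[symmetric] intro!: bexI[of _ "coeff_seq P"])
qed

section \<open>From the \<open>\<ell>\<^sub>1\<close> and \<open>\<ell>\<^sub>\<infinity>\<close> bounds to all \<open>\<ell>\<^sub>p\<close> bounds\<close>

lemma lp_norm_le_interpolation:
  assumes "1 \<le> p" "0 \<le> M" "\<And>k. k \<le> 2 * n \<Longrightarrow> cmod (v k) \<le> M"
    and "(\<Sum>k\<le>2 * n. cmod (v k)) \<le> S"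
  shows "lp_norm n p v \<le> M powr (1 - 1 / p) * S powr (1 / p)"
proof -
  have "0 \<le> S"
    using assms(4) sum_nonneg[of "{..2 * n}" "\<lambda>k. cmod (v k)"] by simp
  have "cmod (v k) powr p \<le> M powr (p - 1) * cmod (v k)" if "k \<le> 2 * n" for k
  proof -
    have "cmod (v k) powr p = cmod (v k) powr (p - 1) * cmod (v k)"
      using powr_add[of "cmod (v k)" "p - 1" 1] by simp
    also have "\<dots> \<le> M powr (p - 1) * cmod (v k)"
      using assms that by (intro mult_right_mono powr_mono2) simp_all
    finally show ?thesis .
  qed
  then have "(\<Sum>k\<le>2 * n. cmod (v k) powr p) \<le> M powr (p - 1) * (\<Sum>k\<le>2 * n. cmod (v k))"
    unfolding sum_distrib_left by (intro sum_mono) simp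
  also have "\<dots> \<le> M powr (p - 1) * S"
    using assms(4) by (rule mult_left_mono) simp
  finally have "lp_norm n p v \<le> (M powr (p - 1) * S) powr (1 / p)"
    unfolding lp_norm_def using assms(1) by (intro powr_mono2) (simp_all add: sum_nonneg)
  also have "\<dots> = M powr (1 - 1 / p) * S powr (1 / p)"
    using assms(1,2) \<open>0 \<le> S\<close> by (simp add: powr_mult powr_powr diff_divide_distrib)
  finally show ?thesis .
qed

lemma lp_norm_le_of_scaled_bounds:
  assumes "1 \<le> p" "0 < q" "1 \<le> c" "\<And>k. k \<le> 2 * n \<Longrightarrow> cmod (v k) \<le> c / q"
    and "(\<Sum>k\<le>2 * n. cmod (v k)) \<le> X / q"
  shows "lp_norm n p v \<le> c * X powr (1 / p) / q"
proof -
  have "0 \<le> X / q"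
    using assms(5) sum_nonneg[of "{..2 * n}" "\<lambda>k. cmod (v k)"] by simp
  then have "0 \<le> X"
    using assms(2) by (simp add: zero_le_divide_iff)
  have "lp_norm n p v \<le> (c / q) powr (1 - 1 / p) * (X / q) powr (1 / p)"
    using assms by (intro lp_norm_le_interpolation) simp_all
  also have "\<dots> = c powr (1 - 1 / p) * X powr (1 / p) / (q powr (1 - 1 / p) * q powr (1 / p))"
    using assms(2,3) \<open>0 \<le> X\<close> by (simp add: powr_divide)
  also have "q powr (1 - 1 / p) * q powr (1 / p) = q"
    using assms(2) by (simp add: powr_add[symmetric])
  also have "c powr (1 - 1 / p) \<le> c"
    using assms(1,3) powr_mono[of "1 - 1 / p" 1 c] by simp
  finally show ?thesis
    using assms(2) \<open>0 \<le> X\<close> by (simp add: divide_right_mono mult_right_mono)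
qed

lemma linf_norm_le: "(\<And>k. k \<le> 2 * n \<Longrightarrow> cmod (v k) \<le> M) \<Longrightarrow> linf_norm n v \<le> M"
  unfolding linf_norm_def by (subst Max_le_iff) auto

lemma two_le_c_star: "2 \<le> c_star"
proof -
  have "0 \<le> 2.16 * pi\<^sup>2"
    by simp
  then show ?thesis
    unfolding c_star_def by linarith
qed

lemma le_of_square_log_bound:
  assumes "1 \<le> s" "2 * real s ^ 2 * ln (2 * real s) \<le> real m"
  shows "s \<le> m"
proof -
  have "ln 2 \<le> ln (2 * real s)"
    using assms(1) by simp
  then have "2 / 3 \<le> ln (2 * real s)"
    using ln2_ge_two_thirds by linarith
  then have "real s ^ 2 \<le> 2 * real s ^ 2 * ln (2 * real s)"
    by (simp add: mult_left_mono[of "1 / 2" _ "2 * real s ^ 2", simplified] order_trans[of _ "2 / 3"])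
  moreover have "real s \<le> real s ^ 2"
    using assms(1) by (simp add: power2_eq_square)
  ultimately show ?thesis
    using assms(2) by linarith
qed

lemma exists_reproducing_filter_lp:
  assumes "1 \<le> s" "4 * s \<le> n" "length ws = s" "\<forall>w\<in>set ws. cmod w \<le> 1"
  shows "\<exists>\<phi>. \<phi> \<in> Cplus (2 * n) \<and> reproducing \<phi> (Xsp ws) \<and>
    (\<forall>p::real. p \<ge> 1 \<longrightarrow>
       lp_norm n p (dft_plus n \<phi>) \<le>
         c_star * (124 * real s ^ 2 * ln (exp 1 * real n)) powr (1 / p) / sqrt (real (2 * n + 1))) \<and>
    linf_norm n (dft_plus n \<phi>) \<le> c_star / sqrt (real (2 * n + 1))"
proof -
  obtain \<phi> where \<phi>: "\<phi> \<in> Cplus (2 * n)" "reproducing \<phi> (Xsp ws)"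
      "\<And>k. cmod (dft_plus n \<phi> k) \<le> 2 / sqrt (real (2 * n + 1))"
      "(\<Sum>k\<le>2 * n. cmod (dft_plus n \<phi> k)) \<le> 124 * real s ^ 2 * ln (exp 1 * real n) / sqrt (real (2 * n + 1))"
    using exists_reproducing_filter[OF assms] by blast
  have "cmod (dft_plus n \<phi> k) \<le> c_star / sqrt (real (2 * n + 1))" for k
    using order_trans[OF \<phi>(3) divide_right_mono[OF two_le_c_star]] by simp
  with \<phi> show ?thesis
    using two_le_c_star by (intro exI[of _ \<phi>] conjI allI impI lp_norm_le_of_scaled_bounds linf_norm_le) simp_all
qed

theorem proposition6:
  shows "\<exists>c0 c1 :: real. c0 > 0 \<and> c1 > 0 \<and>
    (\<forall>(s::nat) (m::nat) (n::nat) (ws::complex list).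
       s \<ge> 1 \<longrightarrow> real m \<ge> c0 * real s ^ 2 * ln (2 * real s) \<longrightarrow> n = 9 * m \<longrightarrow>
       length ws = s \<longrightarrow> (\<forall>w\<in>set ws. cmod w \<le> 1) \<longrightarrow>
       (\<exists>\<phi>. \<phi> \<in> Cplus (2 * n) \<and> reproducing \<phi> (Xsp ws) \<and>
          (\<forall>p::real. p \<ge> 1 \<longrightarrow>
             lp_norm n p (dft_plus n \<phi>) \<le>
               c_star * (c1 * real s ^ 2 * ln (exp 1 * real n)) powr (1 / p) / sqrt (real (2 * n + 1))) \<and>
          linf_norm n (dft_plus n \<phi>) \<le> c_star / sqrt (real (2 * n + 1))))"
proof -
  have n_large: "4 * s \<le> 9 * m" if "1 \<le> s" "2 * real s ^ 2 * ln (2 * real s) \<le> real m" for s m :: nat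
    using le_of_square_log_bound[OF that] by linarith
  show ?thesis
    by (rule exI[of _ "2 :: real"], rule exI[of _ "124 :: real"],
        intro conjI allI impI exists_reproducing_filter_lp) (auto intro: n_large)
qed

end
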